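(* Let $K$ be a finite set of integers with $\min K\ge 3$ and let $\lambda\ge \max K$ be an integer. There exists $N=N(K,\lambda)$ such that every $(v,K,\lambda)$-PBD with $v\ge N$ points has a spanning Euler tour (i.e., admits a spanning universal cycle of rank two).
   Context: A $(v,K,\lambda)$-PBD is a hypergraph on $v$ vertices (points) whose edges (blocks, possibly repeated) have sizes in $K$, such that every $2$-subset of points is contained in exactly $\lambda$ blocks. A closed walk is a cyclic sequence $v_1,e_1,\dots,v_m,e_m$ of vertices and edges with $\{v_i,v_{i+1}\}\subseteq e_i$ and $v_i\ne v_{i+1}$ for all $i$ (indices modulo $m$). An Euler tour (universal cycle of rank two) is a closed walk in which every block (each member of the block multiset) occurs exactly once among $e_1,\dots,e_m$; it is spanning if every point occurs among $v_1,\dots,v_m$. *)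

theory Defs
  imports Main "HOL-Library.Multiset"
begin

definition is_PBD :: "nat \<Rightarrow> nat set \<Rightarrow> nat \<Rightarrow> nat set multiset \<Rightarrow> bool" where
  "is_PBD v K lam Bs \<longleftrightarrow>
     (\<forall>B\<in>#Bs. B \<subseteq> {..<v} \<and> card B \<in> K) \<and>
     (\<forall>x<v. \<forall>y<v. x \<noteq> y \<longrightarrow> size (filter_mset (\<lambda>B. {x, y} \<subseteq> B) Bs) = lam)"

definition closed_walk :: "'a list \<Rightarrow> 'a set list \<Rightarrow> bool" where
  "closed_walk vs es \<longleftrightarrow> length vs = length es \<and>
     (\<forall>i<length vs. {vs ! i, vs ! ((i + 1) mod length vs)} \<subseteq> es ! i
                     \<and> vs ! i \<noteq> vs ! ((i + 1) mod length vs))"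

definition euler_tour :: "'a set multiset \<Rightarrow> 'a list \<Rightarrow> 'a set list \<Rightarrow> bool" where
  "euler_tour Bs vs es \<longleftrightarrow> closed_walk vs es \<and> mset es = Bs"

definition spanning_euler_tour :: "'a set \<Rightarrow> 'a set multiset \<Rightarrow> 'a list \<Rightarrow> 'a set list \<Rightarrow> bool" where
  "spanning_euler_tour V Bs vs es \<longleftrightarrow> euler_tour Bs vs es \<and> V \<subseteq> set vs"

end

theory Submission
  imports Defs
begin

text \<open>A block is traversed by walking between two of its points, so it suffices to choose for every
  block a pair of its points such that the multigraph with one edge per block is connected, meets every
  point and has only even degrees: an Euler circuit of it is then a spanning Euler tour.
  By Hall's theorem there are distinct blocks \<open>\<phi> y \<supseteq> {0, y}\<close> for all points \<open>y \<noteq> 0\<close>; traversing them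
  along \<open>{0, y}\<close> makes the multigraph connected and spanning. For large \<open>v\<close> a counting argument
  provides further distinct blocks, each containing a new point \<open>y\<close>, an already reached point \<open>p\<close>
  and a third point \<open>c\<close>, that reach all points like a spanning tree. Traversing such a block along
  \<open>{y, c}\<close> instead of \<open>{p, c}\<close> flips the parities of the degrees at \<open>y\<close> and \<open>p\<close>, which lets us make
  all degrees except the one at \<open>0\<close> even; the degree at \<open>0\<close> then is even by the handshake lemma.\<close>

section \<open>Hall's marriage theorem\<close>

lemma hall_condition_remove_critical:
  assumes "finite I" "\<forall>K\<subseteq>I. card K \<le> card (\<Union>(A ` K))"
    and "J \<subseteq> I" "card (\<Union>(A ` J)) = card J"
  shows "\<forall>K\<subseteq>I - J. card K \<le> card (\<Union>i\<in>K. A i - \<Union>(A ` J))"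
proof (intro allI impI)
  fix K assume K: "K \<subseteq> I - J"
  have "finite K" "finite J" using K assms(1,3) finite_subset by blast+
  hence "card K + card J = card (K \<union> J)" using K by (intro card_Un_disjoint[symmetric]) auto
  also have "\<dots> \<le> card (\<Union>(A ` (K \<union> J)))" using K assms(3) by (intro assms(2)[rule_format]) auto
  also have "\<Union>(A ` (K \<union> J)) = (\<Union>i\<in>K. A i - \<Union>(A ` J)) \<union> \<Union>(A ` J)" by auto
  also have "card \<dots> \<le> card (\<Union>i\<in>K. A i - \<Union>(A ` J)) + card J"
    using card_Un_le[of "\<Union>i\<in>K. A i - \<Union>(A ` J)" "\<Union>(A ` J)"] assms(4) by simp
  finally show "card K \<le> card (\<Union>i\<in>K. A i - \<Union>(A ` J))" by simp
qed

lemma hall_condition_remove_surplus: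
  assumes "\<forall>i\<in>I. finite (A i)" "i0 \<in> I"
    and "\<forall>K. K \<subseteq> I \<and> K \<noteq> {} \<and> K \<noteq> I \<longrightarrow> card K < card (\<Union>(A ` K))"
  shows "\<forall>K\<subseteq>I - {i0}. card K \<le> card (\<Union>i\<in>K. A i - {x})"
proof (intro allI impI)
  fix K assume K: "K \<subseteq> I - {i0}"
  show "card K \<le> card (\<Union>i\<in>K. A i - {x})"
  proof (cases "K = {}")
    case False
    hence "card K < card (\<Union>(A ` K))" using assms(2,3) K by blast
    moreover have "card (\<Union>(A ` K)) \<le> card (\<Union>(A ` K) - {x}) + 1"
      using diff_card_le_card_Diff[of "{x}" "\<Union>(A ` K)"] by simp
    moreover have "(\<Union>i\<in>K. A i - {x}) = \<Union>(A ` K) - {x}" by auto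
    ultimately show ?thesis by (simp only:)
  qed simp
qed

lemma sdr_combine:
  assumes "inj_on f J" "\<forall>i\<in>J. f i \<in> A i"
    and "inj_on g (I - J)" "\<forall>i\<in>I - J. g i \<in> A i - \<Union>(A ` J)"
  shows "\<exists>h. inj_on h I \<and> (\<forall>i\<in>I. h i \<in> A i)"
proof (intro exI conjI)
  define h where "h i = (if i \<in> J then f i else g i)" for i
  have side: "h c \<in> \<Union>(A ` J) \<longleftrightarrow> c \<in> J" if "c \<in> I" for c
    using that assms(2,4) unfolding h_def by auto
  show "inj_on h I"
  proof (rule inj_onI)
    fix a b assume ab: "a \<in> I" "b \<in> I" "h a = h b"
    hence "a \<in> J \<longleftrightarrow> b \<in> J" using side by metis
    thus "a = b" using ab assms(1,3) unfolding h_def by (metis DiffI inj_onD)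
  qed
  show "\<forall>i\<in>I. h i \<in> A i" using assms(2,4) unfolding h_def by auto
qed

theorem hall_marriage:
  fixes I :: "'i set" and A :: "'i \<Rightarrow> 'b set"
  assumes "finite I" "\<forall>i\<in>I. finite (A i)" "\<forall>K\<subseteq>I. card K \<le> card (\<Union>(A ` K))"
  shows "\<exists>f. inj_on f I \<and> (\<forall>i\<in>I. f i \<in> A i)"
  using assms
proof (induction "card I" arbitrary: I A rule: less_induct)
  case less
  show ?case
  proof (cases "\<exists>J. J \<subseteq> I \<and> J \<noteq> {} \<and> J \<noteq> I \<and> card (\<Union>(A ` J)) = card J")
    case True
    text \<open>A critical subfamily \<open>J\<close> uses up its whole neighbourhood; the rest must avoid it.\<close>
    then obtain J where J: "J \<subseteq> I" "J \<noteq> {}" "J \<noteq> I" "card (\<Union>(A ` J)) = card J" by blast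
    define U where "U = \<Union>(A ` J)"
    have finJ: "finite J" using J(1) less.prems(1) finite_subset by blast
    have "card J < card I" using J less.prems(1) by (meson psubsetI psubset_card_mono)
    moreover have "\<forall>i\<in>J. finite (A i)" "\<forall>K\<subseteq>J. card K \<le> card (\<Union>(A ` K))"
      using less.prems(2,3) J(1) by auto
    ultimately obtain f1 where f1: "inj_on f1 J" "\<forall>i\<in>J. f1 i \<in> A i"
      using less.hyps finJ by metis
    have "I - J \<subset> I" using J(1,2) by blast
    hence "card (I - J) < card I" using less.prems(1) by (rule psubset_card_mono[rotated])
    moreover have "finite (I - J)" "\<forall>i\<in>I - J. finite (A i - U)"
      using less.prems(1,2) by auto
    ultimately obtain f2 where f2: "inj_on f2 (I - J)" "\<forall>i\<in>I - J. f2 i \<in> A i - U"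
      using less.hyps hall_condition_remove_critical[OF less.prems(1,3) J(1,4)]
      unfolding U_def by metis
    show ?thesis using sdr_combine[OF f1 f2[unfolded U_def]] .
  next
    case False
    text \<open>Every proper subfamily has surplus, so one set may be matched arbitrarily.\<close>
    hence surplus: "\<forall>K. K \<subseteq> I \<and> K \<noteq> {} \<and> K \<noteq> I \<longrightarrow> card K < card (\<Union>(A ` K))"
      using less.prems(3) by (metis le_neq_implies_less)
    show ?thesis
    proof (cases "I = {}")
      case False
      then obtain i0 where i0: "i0 \<in> I" by blast
      hence "card {i0} \<le> card (A i0)" using less.prems(3)[rule_format, of "{i0}"] by simp
      then obtain x where x: "x \<in> A i0" by fastforce
      have "card (I - {i0}) < card I" using i0 less.prems(1) by (rule card_Diff1_less[rotated])
      moreover have "finite (I - {i0})" "\<forall>i\<in>I - {i0}. finite (A i - {x})"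
        using less.prems(1,2) by auto
      ultimately obtain g where g: "inj_on g (I - {i0})" "\<forall>i\<in>I - {i0}. g i \<in> A i - {x}"
        using less.hyps hall_condition_remove_surplus[OF less.prems(2) i0 surplus] by metis
      have "x \<notin> g ` (I - {i0})" using g(2) by auto
      moreover have "inj_on (g(i0 := x)) (I - {i0})" using g(1) by (simp add: inj_on_def)
      ultimately have "inj_on (g(i0 := x)) (insert i0 (I - {i0}))" by (simp only: inj_on_insert) simp
      hence "inj_on (g(i0 := x)) I" using i0 by (simp add: insert_absorb)
      moreover have "\<forall>i\<in>I. (g(i0 := x)) i \<in> A i" using g(2) x by auto
      ultimately show ?thesis by blast
    qed simp
  qed
qed

section \<open>Euler circuits of multigraphs\<close>

text \<open>An edge of a multigraph is a pair (set of two ends, label); a dart \<open>(u, w, e)\<close> traverses the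
  edge labelled \<open>e\<close> from \<open>u\<close> to \<open>w\<close>.\<close>
fun dart_walk :: "'a \<Rightarrow> ('a \<times> 'a \<times> 'e) list \<Rightarrow> 'a \<Rightarrow> bool" where
  "dart_walk u [] w \<longleftrightarrow> u = w"
| "dart_walk u (d # ds) w \<longleftrightarrow> u = fst d \<and> dart_walk (fst (snd d)) ds w"

definition undirected :: "'a \<times> 'a \<times> 'e \<Rightarrow> 'a set \<times> 'e" where
  "undirected d = ({fst d, fst (snd d)}, snd (snd d))"

definition edge_degree :: "('a set \<times> 'e) multiset \<Rightarrow> 'a \<Rightarrow> nat" where
  "edge_degree M x = size (filter_mset (\<lambda>e. x \<in> fst e) M)"

abbreviation edges_of :: "('a \<times> 'a \<times> 'e) list \<Rightarrow> ('a set \<times> 'e) multiset" where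
  "edges_of ds \<equiv> mset (map undirected ds)"

lemma edge_degree_pos_iff: "edge_degree M x > 0 \<longleftrightarrow> (\<exists>e\<in>#M. x \<in> fst e)"
  unfolding edge_degree_def by (metis filter_mset_eq_mempty_iff nonempty_has_size)

lemma edge_degree_plus: "edge_degree (M + N) x = edge_degree M x + edge_degree N x"
  unfolding edge_degree_def by simp

lemma edge_degree_edges_of:
  "edge_degree (edges_of ds) x = length (filter (\<lambda>d. x = fst d \<or> x = fst (snd d)) ds)"
  unfolding edge_degree_def undirected_def by (induction ds) auto

lemma undirected_dart:
  assumes "fst e = {x, y}" shows "undirected (x, y, snd e) = e"
  using assms unfolding undirected_def by (metis fst_conv prod.collapse snd_conv)

lemma edge_other_end:
  assumes "card s = 2" "x \<in> s" obtains y where "y \<noteq> x" "s = {x, y}"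
  using assms by (metis card_2_iff doubleton_eq_iff insertE singletonD)

lemma dart_walk_append: "dart_walk u ds m \<Longrightarrow> dart_walk m ds' w \<Longrightarrow> dart_walk u (ds @ ds') w"
  by (induction ds arbitrary: u) auto

lemma dart_walk_split:
  assumes "dart_walk u ds w" "\<exists>d\<in>set ds. x = fst d \<or> x = fst (snd d)"
  obtains ds1 ds2 where "ds = ds1 @ ds2" "dart_walk u ds1 x" "dart_walk x ds2 w"
  using assms
proof (induction ds arbitrary: u thesis)
  case (Cons d ds)
  show ?case
  proof (cases "x = fst d \<or> x = fst (snd d)")
    case True
    thus ?thesis
      using Cons.prems(1)[of "[]" "d # ds"] Cons.prems(1)[of "[d]" ds] Cons.prems(2) by auto
  next
    case False
    thus ?thesis using Cons.prems Cons.IH[of "fst (snd d)"]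
      by (metis append_Cons dart_walk.simps(2) set_ConsD)
  qed
qed simp

lemma dart_walk_degree_parity:
  assumes "dart_walk u ds w" "\<forall>d\<in>set ds. fst d \<noteq> fst (snd d)"
  shows "even (edge_degree (edges_of ds) x + of_bool (x = u) + of_bool (x = w))"
  using assms
proof (induction ds arbitrary: u)
  case (Cons d ds)
  have "even (edge_degree (edges_of ds) x + of_bool (x = fst (snd d)) + of_bool (x = w))"
    using Cons by auto
  thus ?case using Cons.prems unfolding edge_degree_edges_of by auto
qed (simp add: edge_degree_def)

lemma loopless_darts:
  assumes "\<forall>e\<in>#M. card (fst e) = 2" "edges_of ds \<subseteq># M" "d \<in> set ds"
  shows "fst d \<noteq> fst (snd d)"
proof -
  have "undirected d \<in># edges_of ds" using assms(3) by simp
  hence "undirected d \<in># M" using assms(2) by (rule mset_subset_eqD[rotated])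
  thus ?thesis using assms(1) unfolding undirected_def by fastforce
qed

lemma subset_mset_add_of_subset_diff:
  assumes "A \<subseteq># B" "C \<subseteq># B - A" shows "A + C \<subseteq># B"
  using subset_mset.add_left_mono[OF assms(2), of A] assms(1)
  by (simp add: subset_mset.add_diff_inverse)

lemma longest_trail:
  assumes "P ds0" "\<And>ds. P ds \<Longrightarrow> edges_of ds \<subseteq># M"
  obtains ds where "P ds" "\<And>ds'. P ds' \<Longrightarrow> length ds' \<le> length ds"
proof -
  have "length ds < size M + 1" if "P ds" for ds
    using size_mset_mono[OF assms(2)[OF that]] by simp
  thus ?thesis using ex_has_greatest_nat[of P ds0 length "size M + 1"] assms(1) that by blast
qed

lemma trail_extend:
  assumes "\<forall>e\<in>#M. card (fst e) = 2" "\<forall>y. even (edge_degree M y)"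
    and "dart_walk x ds w" "w \<noteq> x" "edges_of ds \<subseteq># M"
  obtains d where "dart_walk x (ds @ [d]) (fst (snd d))" "edges_of (ds @ [d]) \<subseteq># M"
proof -
  text \<open>A trail ending away from its start has odd degree at its end, so an unused edge leaves it.\<close>
  have "odd (edge_degree (edges_of ds) w)"
    using dart_walk_degree_parity[OF assms(3), of w] loopless_darts[OF assms(1,5)] assms(4) by auto
  moreover have "edge_degree M w = edge_degree (edges_of ds) w + edge_degree (M - edges_of ds) w"
    using assms(5) by (metis edge_degree_plus subset_mset.add_diff_inverse)
  ultimately have "edge_degree (M - edges_of ds) w > 0" using assms(2) by (metis even_add odd_pos)
  then obtain e where e: "e \<in># M - edges_of ds" "w \<in> fst e" using edge_degree_pos_iff by metis
  moreover have "card (fst e) = 2" using assms(1) e(1) by (meson in_diffD)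
  ultimately obtain y where y: "fst e = {w, y}" using edge_other_end by metis
  have "edges_of ds + {#e#} \<subseteq># M"
    using subset_mset_add_of_subset_diff[OF assms(5), of "{#e#}"] e(1) by (simp del: add_mset_add_single)
  hence "edges_of (ds @ [(w, y, snd e)]) \<subseteq># M" using undirected_dart[OF y] by simp
  moreover have "dart_walk x (ds @ [(w, y, snd e)]) y" using dart_walk_append[OF assms(3)] by simp
  ultimately show ?thesis using that by fastforce
qed

lemma closed_trail_exists:
  assumes "\<forall>e\<in>#M. card (fst e) = 2" "\<forall>y. even (edge_degree M y)" "edge_degree M x > 0"
  obtains c where "c \<noteq> []" "dart_walk x c x" "edges_of c \<subseteq># M"
proof -
  define P where "P ds \<longleftrightarrow> ds \<noteq> [] \<and> (\<exists>w. dart_walk x ds w) \<and> edges_of ds \<subseteq># M" for ds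
  obtain e where e: "e \<in># M" "x \<in> fst e" using assms(3) edge_degree_pos_iff by metis
  then obtain y where "fst e = {x, y}" using assms(1) edge_other_end by metis
  hence "P [(x, y, snd e)]" using e(1) undirected_dart[of e x y] unfolding P_def by auto
  then obtain ds where ds: "P ds" and longest: "\<And>ds'. P ds' \<Longrightarrow> length ds' \<le> length ds"
    using longest_trail[of P] unfolding P_def by blast
  then obtain w where w: "dart_walk x ds w" "edges_of ds \<subseteq># M" "ds \<noteq> []" unfolding P_def by blast
  show ?thesis
  proof (cases "w = x")
    case False
    then obtain d where "dart_walk x (ds @ [d]) (fst (snd d))" "edges_of (ds @ [d]) \<subseteq># M"
      using trail_extend[OF assms(1,2) w(1) _ w(2)] by blast
    hence "P (ds @ [d])" unfolding P_def by blast
    thus ?thesis using longest by fastforce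
  qed (use w that in blast)
qed

definition closed_under_edges :: "('a set \<times> 'e) multiset \<Rightarrow> 'a set \<Rightarrow> bool" where
  "closed_under_edges M S \<longleftrightarrow> (\<forall>e\<in>#M. fst e \<inter> S \<noteq> {} \<longrightarrow> fst e \<subseteq> S)"

lemma leftover_edge_meets_walk:
  assumes "\<forall>e\<in>#M. card (fst e) = 2"
    and conn: "\<forall>S. z \<in> S \<longrightarrow> closed_under_edges M S \<longrightarrow> (\<forall>e\<in>#M. fst e \<subseteq> S)"
    and "edges_of ds \<subseteq># M" "edges_of ds \<noteq> M"
  obtains e x where "e \<in># M - edges_of ds" "x \<in> fst e"
    "x = z \<or> (\<exists>d\<in>set ds. x = fst d \<or> x = fst (snd d))"
proof -
  define S where "S = insert z {x. \<exists>d\<in>set ds. x = fst d \<or> x = fst (snd d)}"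
  have M: "edges_of ds + (M - edges_of ds) = M" using assms(3) by (rule subset_mset.add_diff_inverse)
  have walk_edges: "fst e \<subseteq> S" if "e \<in># edges_of ds" for e
    using that unfolding S_def undirected_def by force
  show ?thesis
  proof (cases "closed_under_edges (M - edges_of ds) S")
    case True
    have "closed_under_edges M S"
      unfolding closed_under_edges_def
    proof (intro ballI impI)
      fix e assume "e \<in># M" "fst e \<inter> S \<noteq> {}"
      moreover have "e \<in># edges_of ds \<or> e \<in># M - edges_of ds"
        using \<open>e \<in># M\<close> M by (metis union_iff)
      ultimately show "fst e \<subseteq> S" using True walk_edges unfolding closed_under_edges_def by blast
    qed
    hence all: "\<forall>e\<in>#M. fst e \<subseteq> S" using conn unfolding S_def by blast
    have "M - edges_of ds \<noteq> {#}" using assms(4) M by force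
    then obtain e where e: "e \<in># M - edges_of ds" by blast
    hence "e \<in># M" by (rule in_diffD)
    hence "fst e \<subseteq> S" "fst e \<noteq> {}" using all assms(1) by fastforce+
    then obtain x where "x \<in> fst e" "x \<in> S" by blast
    thus ?thesis using that e unfolding S_def by blast
  next
    case False
    then obtain e x where "e \<in># M - edges_of ds" "x \<in> fst e" "x \<in> S"
      unfolding closed_under_edges_def by blast
    thus ?thesis using that unfolding S_def by blast
  qed
qed

theorem euler_circuit_exists:
  assumes "\<forall>e\<in>#M. card (fst e) = 2" "\<forall>y. even (edge_degree M y)"
    and "\<forall>S. z \<in> S \<longrightarrow> closed_under_edges M S \<longrightarrow> (\<forall>e\<in>#M. fst e \<subseteq> S)"
  obtains ds where "dart_walk z ds z" "edges_of ds = M"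
proof -
  define P where "P ds \<longleftrightarrow> dart_walk z ds z \<and> edges_of ds \<subseteq># M" for ds
  obtain ds where "P ds" and longest: "\<And>ds'. P ds' \<Longrightarrow> length ds' \<le> length ds"
    using longest_trail[of P "[]"] unfolding P_def by auto
  hence ds: "dart_walk z ds z" "edges_of ds \<subseteq># M" unfolding P_def by auto
  show ?thesis
  proof (cases "edges_of ds = M")
    case False
    text \<open>Splice a closed trail of unused edges into the circuit where they meet it.\<close>
    obtain e x where e: "e \<in># M - edges_of ds" "x \<in> fst e"
      and x: "x = z \<or> (\<exists>d\<in>set ds. x = fst d \<or> x = fst (snd d))"
      using leftover_edge_meets_walk[OF assms(1,3) ds(2) False] by blast
    obtain ds1 ds2 where split: "ds = ds1 @ ds2" "dart_walk z ds1 x" "dart_walk x ds2 z"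
      using x ds(1) dart_walk_split[OF ds(1)] by (metis append.left_neutral dart_walk.simps(1))
    have evT: "even (edge_degree (edges_of ds) y)" for y
      using dart_walk_degree_parity[OF ds(1) ballI[OF loopless_darts[OF assms(1) ds(2)]], of y]
      by auto
    have "edge_degree M y = edge_degree (edges_of ds) y + edge_degree (M - edges_of ds) y" for y
      using ds(2) by (metis edge_degree_plus subset_mset.add_diff_inverse)
    hence "\<forall>y. even (edge_degree (M - edges_of ds) y)" using assms(2) evT by (metis even_add)
    moreover have "\<forall>e\<in>#M - edges_of ds. card (fst e) = 2" using assms(1) by (meson in_diffD)
    moreover have "edge_degree (M - edges_of ds) x > 0" using e edge_degree_pos_iff by metis
    ultimately obtain c where c: "c \<noteq> []" "dart_walk x c x" "edges_of c \<subseteq># M - edges_of ds"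
      using closed_trail_exists by metis
    have "dart_walk z (ds1 @ c @ ds2) z" using split c(2) by (metis dart_walk_append)
    moreover have "edges_of (ds1 @ c @ ds2) \<subseteq># M"
      using c(3) ds(2) split(1) by (simp add: subset_mset.le_diff_conv2 union_commute add.left_commute)
    ultimately have "P (ds1 @ c @ ds2)" unfolding P_def by blast
    thus ?thesis using longest split(1) c(1) by fastforce
  qed (use ds that in blast)
qed

lemma dart_walk_nth_head:
  "dart_walk u ds w \<Longrightarrow> i < length ds \<Longrightarrow>
     fst (snd (ds ! i)) = (if Suc i < length ds then fst (ds ! Suc i) else w)"
proof (induction ds arbitrary: u i)
  case (Cons d ds)
  thus ?case by (cases i; cases ds) auto
qed simp

lemma closed_dart_walk_next_tail:
  assumes "dart_walk z ds z" "i < length ds"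
  shows "map fst ds ! ((i + 1) mod length ds) = fst (snd (ds ! i))"
proof (cases "Suc i < length ds")
  case True thus ?thesis using dart_walk_nth_head[OF assms] by simp
next
  case False
  hence "Suc i = length ds" using assms(2) by simp
  moreover have "map fst ds ! 0 = z" using assms by (cases ds) auto
  ultimately show ?thesis using dart_walk_nth_head[OF assms] assms(2) by simp
qed

lemma closed_dart_walk_closed_walk:
  assumes "dart_walk z ds z" "\<forall>d\<in>set ds. fst d \<noteq> fst (snd d) \<and> {fst d, fst (snd d)} \<subseteq> snd (snd d)"
  shows "closed_walk (map fst ds) (map (snd \<circ> snd) ds)"
  unfolding closed_walk_def
proof (intro conjI allI impI)
  fix i assume "i < length (map fst ds)"
  hence "i < length ds" "ds ! i \<in> set ds" by simp_all
  thus "{map fst ds ! i, map fst ds ! ((i + 1) mod length (map fst ds))} \<subseteq> map (snd \<circ> snd) ds ! i"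
    "map fst ds ! i \<noteq> map fst ds ! ((i + 1) mod length (map fst ds))"
    using closed_dart_walk_next_tail[OF assms(1)] assms(2) by auto
qed simp

lemma closed_dart_walk_heads:
  assumes "dart_walk z ds z" "d \<in> set ds" shows "fst (snd d) \<in> set (map fst ds)"
proof -
  obtain i where i: "i < length ds" "d = ds ! i" using assms(2) by (metis in_set_conv_nth)
  hence "(i + 1) mod length ds < length ds" by (intro mod_less_divisor) linarith
  thus ?thesis using closed_dart_walk_next_tail[OF assms(1) i(1)] i(2) by (metis length_map nth_mem)
qed

section \<open>Pairwise balanced designs\<close>

lemma double_counting:
  assumes "finite S" "finite T"
  shows "(\<Sum>x\<in>S. card {y\<in>T. R x y}) = (\<Sum>y\<in>T. card {x\<in>S. R x y})"
proof -
  have "card {y\<in>T. R x y} = (\<Sum>y\<in>T. if R x y then 1 else 0)" for x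
    using sum.inter_filter[OF assms(2), of "\<lambda>_. 1::nat" "R x"] by simp
  moreover have "card {x\<in>S. R x y} = (\<Sum>x\<in>S. if R x y then 1 else 0)" for y
    using sum.inter_filter[OF assms(1), of "\<lambda>_. 1::nat" "\<lambda>x. R x y"] by simp
  ultimately show ?thesis using sum.swap by simp
qed

text \<open>Blocks are kept as a list so that repeated blocks are distinguished by their index.\<close>
locale pbd_blocks =
  fixes v k lam :: nat and bl :: "nat set list"
  assumes k_ge_3: "k \<ge> 3" and lam_ge_k: "lam \<ge> k"
    and block_props: "\<And>i. i < length bl \<Longrightarrow> bl ! i \<subseteq> {..<v} \<and> 3 \<le> card (bl ! i) \<and> card (bl ! i) \<le> k"
    and pair_count: "\<And>x y. x < v \<Longrightarrow> y < v \<Longrightarrow> x \<noteq> y \<Longrightarrow>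
      card {i. i < length bl \<and> {x, y} \<subseteq> bl ! i} = lam"
begin

definition "blocks = {..<length bl}"
definition "points = {..<v}"
definition "point_blocks x = {i\<in>blocks. x \<in> bl ! i}"
definition "pair_blocks x y = {i\<in>blocks. {x, y} \<subseteq> bl ! i}"

lemma finite_blocks [simp]: "finite blocks"
  unfolding blocks_def by simp

lemma finite_points [simp]: "finite points"
  unfolding points_def by simp

lemma block_subset_points: "i \<in> blocks \<Longrightarrow> bl ! i \<subseteq> points"
  using block_props[of i] by (simp add: blocks_def points_def)

lemma finite_block: "i \<in> blocks \<Longrightarrow> finite (bl ! i)"
  using finite_subset[OF block_subset_points finite_points] .

lemma card_block: "i \<in> blocks \<Longrightarrow> 3 \<le> card (bl ! i) \<and> card (bl ! i) \<le> k"
  using block_props[of i] by (simp add: blocks_def)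

lemma card_block_minus_point: "i \<in> blocks \<Longrightarrow> x \<in> bl ! i \<Longrightarrow> card (bl ! i - {x}) \<le> k - 1"
  using card_block finite_block by (simp add: diff_le_mono)

lemma block_third_point:
  assumes "i \<in> blocks" obtains c where "c \<in> bl ! i" "c \<noteq> y" "c \<noteq> p"
proof -
  have "card {y, p} \<le> 2" by (cases "y = p") auto
  moreover have "card (bl ! i) - card {y, p} \<le> card (bl ! i - {y, p})"
    by (rule diff_card_le_card_Diff) simp
  moreover have "3 \<le> card (bl ! i)" using card_block assms by blast
  ultimately have "card (bl ! i - {y, p}) > 0" by linarith
  hence "bl ! i - {y, p} \<noteq> {}" by (metis card.empty less_irrefl)
  thus ?thesis using that by blast
qed

lemma card_pair_blocks: "x \<in> points \<Longrightarrow> y \<in> points \<Longrightarrow> x \<noteq> y \<Longrightarrow> card (pair_blocks x y) = lam"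
  unfolding pair_blocks_def blocks_def points_def using pair_count by simp

lemma finite_pair_blocks [simp]: "finite (pair_blocks x y)"
  unfolding pair_blocks_def by simp

lemma pair_blocks_eq: "pair_blocks x y = {i \<in> point_blocks x. y \<in> bl ! i}"
  unfolding pair_blocks_def point_blocks_def by auto

lemma replication_lower_bound:
  assumes "x \<in> points" shows "lam * (v - 1) \<le> (k - 1) * card (point_blocks x)"
proof -
  have "lam * (v - 1) = (\<Sum>y\<in>points - {x}. card (pair_blocks x y))"
    using card_pair_blocks assms by (simp add: points_def)
  also have "\<dots> = (\<Sum>i\<in>point_blocks x. card {y\<in>points - {x}. y \<in> bl ! i})"
    unfolding pair_blocks_eq by (rule double_counting) (simp_all add: point_blocks_def)
  also have "\<dots> \<le> (\<Sum>i\<in>point_blocks x. k - 1)"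
  proof (rule sum_mono)
    fix i assume "i \<in> point_blocks x"
    hence "i \<in> blocks" "x \<in> bl ! i" unfolding point_blocks_def by auto
    moreover hence "{y\<in>points - {x}. y \<in> bl ! i} = bl ! i - {x}" using block_subset_points by auto
    ultimately show "card {y\<in>points - {x}. y \<in> bl ! i} \<le> k - 1" using card_block_minus_point by simp
  qed
  finally show ?thesis by (simp add: mult.commute)
qed

lemma card_blocks_inside:
  assumes "y \<in> S" "S \<subseteq> points"
  shows "card {i\<in>point_blocks y. bl ! i \<subseteq> S} \<le> lam * (card S - 1)"
proof -
  have finS: "finite S" using finite_subset[OF assms(2) finite_points] .
  have "{i\<in>point_blocks y. bl ! i \<subseteq> S} \<subseteq> (\<Union>y'\<in>S - {y}. pair_blocks y y')"
  proof
    fix i assume i: "i \<in> {i\<in>point_blocks y. bl ! i \<subseteq> S}"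
    hence "i \<in> blocks" "y \<in> bl ! i" "bl ! i \<subseteq> S" unfolding point_blocks_def by auto
    moreover have "\<not> bl ! i \<subseteq> {y}"
      using card_block[OF \<open>i \<in> blocks\<close>] card_mono[of "{y}" "bl ! i"] by auto
    ultimately show "i \<in> (\<Union>y'\<in>S - {y}. pair_blocks y y')" unfolding pair_blocks_def by blast
  qed
  hence "card {i\<in>point_blocks y. bl ! i \<subseteq> S} \<le> card (\<Union>y'\<in>S - {y}. pair_blocks y y')"
    using finS by (intro card_mono) auto
  also have "\<dots> \<le> (\<Sum>y'\<in>S - {y}. card (pair_blocks y y'))" by (rule card_UN_le) (use finS in simp)
  also have "\<dots> = lam * (card S - 1)"
    using assms card_pair_blocks finS by (simp add: subset_iff)
  finally show ?thesis .
qed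

text \<open>Hall's condition holds because each block through \<open>x\<close> covers at most \<open>k - 1 \<le> lam\<close> pairs \<open>{x, y}\<close>.\<close>
lemma star_blocks_sdr:
  assumes "x \<in> points"
  obtains phi where "inj_on phi (points - {x})" "\<forall>y\<in>points - {x}. phi y \<in> pair_blocks x y"
proof -
  have "card Y \<le> card (\<Union>(pair_blocks x ` Y))" if Y: "Y \<subseteq> points - {x}" for Y
  proof -
    define U where "U = \<Union>(pair_blocks x ` Y)"
    have "finite Y" using Y by (meson Diff_subset finite_points finite_subset subset_trans)
    hence fin: "finite Y" "finite U" unfolding U_def by auto
    have "card {i\<in>U. {x, y} \<subseteq> bl ! i} = lam" if "y \<in> Y" for y
    proof -
      have "pair_blocks x y = {i\<in>U. {x, y} \<subseteq> bl ! i}"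
        using that unfolding U_def pair_blocks_def by auto
      thus ?thesis using that Y assms card_pair_blocks[of x y] by auto
    qed
    hence "(\<Sum>y\<in>Y. card {i\<in>U. {x, y} \<subseteq> bl ! i}) = (\<Sum>y\<in>Y. lam)" by simp
    hence "lam * card Y = (\<Sum>y\<in>Y. card {i\<in>U. {x, y} \<subseteq> bl ! i})" by simp
    also have "\<dots> = (\<Sum>i\<in>U. card {y\<in>Y. {x, y} \<subseteq> bl ! i})" by (rule double_counting[OF fin])
    also have "\<dots> \<le> (\<Sum>i\<in>U. k - 1)"
    proof (rule sum_mono)
      fix i assume "i \<in> U"
      hence i: "i \<in> blocks" "x \<in> bl ! i" unfolding U_def pair_blocks_def by auto
      have "card {y\<in>Y. {x, y} \<subseteq> bl ! i} \<le> card (bl ! i - {x})"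
        using Y finite_block[OF i(1)] by (intro card_mono) auto
      thus "card {y\<in>Y. {x, y} \<subseteq> bl ! i} \<le> k - 1" using card_block_minus_point[OF i] by simp
    qed
    finally have "lam * card Y \<le> (k - 1) * card U" by (simp add: mult.commute)
    moreover have "(k - 1) * card Y \<le> lam * card Y" using lam_ge_k by (intro mult_right_mono) auto
    ultimately have "(k - 1) * card Y \<le> (k - 1) * card U" by linarith
    thus ?thesis using k_ge_3 unfolding U_def by simp
  qed
  hence "\<forall>Y\<subseteq>points - {x}. card Y \<le> card (\<Union>(pair_blocks x ` Y))" by blast
  thus ?thesis using hall_marriage[of "points - {x}" "pair_blocks x"] that by simp blast
qed

end

section \<open>Crossing blocks\<close>

lemma cut_bound_far_side:
  fixes L k v j m :: int
  assumes "0 \<le> j" "1 \<le> m" "m + j = v" "k \<ge> 1" "L \<ge> k" "L * (v - 1) \<le> (k - 1) * ((m - 1) + L * j)"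
  shows "v - 1 \<le> k * L * j"
proof -
  have m: "m = v - j" using assms(3) by simp
  have "(k - 1) * ((m - 1) + L * j) = (k - 1) * (v - 1) + (k - 1) * (L - 1) * j"
    unfolding m by (simp add: algebra_simps)
  hence "(L - k + 1) * (v - 1) \<le> (k - 1) * (L - 1) * j" using assms(6) by (simp add: algebra_simps)
  moreover have "1 * (v - 1) \<le> (L - k + 1) * (v - 1)" using assms by (intro mult_right_mono) auto
  moreover have "(k - 1) * (L - 1) \<le> k * L" using assms by (intro mult_mono) auto
  hence "(k - 1) * (L - 1) * j \<le> k * L * j" using assms(1) by (rule mult_right_mono)
  ultimately show ?thesis by (metis mult_1 order_trans)
qed

lemma cut_bound_near_side:
  fixes L k v m :: int
  assumes "1 \<le> m" "k \<ge> 1" "L \<ge> 1" "L * (v - 1) \<le> (k - 1) * ((m - 1) + L * m)"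
  shows "v - 1 \<le> 2 * k * m"
proof -
  have "1 * m \<le> L * m" using assms by (intro mult_right_mono) auto
  hence "m - 1 + L * m \<le> 2 * L * m" by simp
  hence "(k - 1) * ((m - 1) + L * m) \<le> (k - 1) * (2 * L * m)" using assms by (intro mult_left_mono) auto
  hence "L * (v - 1) \<le> L * (2 * (k - 1) * m)" using assms(4) by (simp add: algebra_simps)
  hence "v - 1 \<le> 2 * (k - 1) * m" using assms(3) by simp
  thus ?thesis using assms by (smt (verit) mult_right_mono)
qed

lemma cut_bounds_incompatible:
  fixes L k v j m :: int
  assumes "v \<ge> 4 * k^4 + 3" "v - 1 \<le> k * L * j" "v - 1 \<le> 2 * k * m" "L * m * j \<le> k^2 * (2 * v)"
    "0 \<le> j" "0 \<le> m" "0 \<le> L" "0 \<le> k"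
  shows False
proof -
  have k4: "k^4 \<ge> 0" using assms(8) by simp
  hence v1: "v - 1 \<ge> 0" using assms(1) by linarith
  have "(v - 1) * (v - 1) \<le> (k * L * j) * (2 * k * m)"
    using assms v1 by (intro mult_mono) auto
  also have "\<dots> = 2 * k^2 * (L * m * j)" by (simp add: algebra_simps power2_eq_square)
  also have "\<dots> \<le> 2 * k^2 * (k^2 * (2 * v))" using assms by (intro mult_left_mono) auto
  also have "\<dots> = 4 * k^4 * v" by (simp add: algebra_simps power2_eq_square power4_eq_xxxx)
  finally have "(v - 1) * (v - 1) \<le> 4 * k^4 * v" .
  moreover have "(v - 1) * (4 * k^4 + 2) \<le> (v - 1) * (v - 1)" using v1 assms by (intro mult_left_mono) auto
  ultimately have "4 * k^4 * v + 2 * v - 4 * k^4 - 2 \<le> 4 * k^4 * v" by (simp add: algebra_simps)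
  thus False using assms(1) k4 by linarith
qed

text \<open>The arithmetic behind \<open>cut_crossed\<close> below; \<open>m\<close> and \<open>j\<close> are the sizes of the two sides of the cut.\<close>
lemma cut_inequalities_incompatible:
  fixes k lam v m j :: nat
  assumes "k \<ge> 3" "lam \<ge> k" "v \<ge> 4 * k^4 + 3" "m + j = v" "m \<ge> 1"
    and "lam * (v - 1) \<le> (k - 1) * ((m - 1) + lam * j)"
    and "lam * (v - 1) \<le> (k - 1) * ((m - 1) + lam * m)"
    and "m * j * lam \<le> 2 * v * k^2"
  shows False
proof -
  have "int (lam * (v - 1)) = int lam * (int v - 1)" using assms(3) by (simp add: of_nat_diff)
  moreover have "int ((k - 1) * ((m - 1) + lam * s)) = (int k - 1) * ((int m - 1) + int lam * int s)"
    for s using assms(1,5) by (simp add: of_nat_diff)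
  ultimately have "int lam * (int v - 1) \<le> (int k - 1) * ((int m - 1) + int lam * int j)"
    "int lam * (int v - 1) \<le> (int k - 1) * ((int m - 1) + int lam * int m)"
    using assms(6,7) by (metis of_nat_le_iff)+
  hence "int v - 1 \<le> int k * int lam * int j" "int v - 1 \<le> 2 * int k * int m"
    using cut_bound_far_side[of "int j" "int m" "int v" "int k" "int lam"]
      cut_bound_near_side[of "int m" "int k" "int lam" "int v"] assms(1,2,4,5) by simp_all
  moreover have "int lam * int m * int j \<le> (int k)^2 * (2 * int v)"
    using assms(8)[folded of_nat_le_iff[where 'a=int]] by (simp add: algebra_simps)
  moreover have "int v \<ge> 4 * (int k)^4 + 3" using assms(3)[folded of_nat_le_iff[where 'a=int]] by simp
  ultimately show False using cut_bounds_incompatible by fastforce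
qed

context pbd_blocks
begin

text \<open>Abstracts the set of star blocks \<open>\<phi> y \<supseteq> {0, y}\<close> provided by Hall's theorem.\<close>
definition star_like :: "nat set \<Rightarrow> bool" where
  "star_like Phi \<longleftrightarrow> Phi \<subseteq> blocks \<and> card Phi \<le> v - 1 \<and>
     (\<forall>y\<in>points - {0}. Phi \<inter> point_blocks y \<subseteq> pair_blocks 0 y)"

lemma card_point_blocks_one_sided:
  assumes "star_like Phi" "y \<in> S" "S \<subseteq> points" "y \<noteq> 0" "U \<subseteq> blocks"
    and inside: "\<forall>i\<in>point_blocks y - (U \<union> Phi). bl ! i \<subseteq> S"
  shows "card (point_blocks y) \<le> card U + lam * card S"
proof -
  have y: "y \<in> points" "0 \<in> points" using assms(2,3) by (auto simp: points_def)
  have "point_blocks y \<subseteq> U \<union> pair_blocks 0 y \<union> {i\<in>point_blocks y. bl ! i \<subseteq> S}"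
    using assms(1,4) inside y(1) unfolding star_like_def by blast
  hence "card (point_blocks y) \<le> card (U \<union> pair_blocks 0 y \<union> {i\<in>point_blocks y. bl ! i \<subseteq> S})"
    using finite_subset[OF assms(5)] by (intro card_mono) (auto simp: point_blocks_def)
  also have "\<dots> \<le> card U + card (pair_blocks 0 y) + card {i\<in>point_blocks y. bl ! i \<subseteq> S}"
    by (meson add_le_mono card_Un_le le_refl order_trans)
  also have "\<dots> \<le> card U + lam + lam * (card S - 1)"
    using card_pair_blocks[OF y(2,1)] assms(4) card_blocks_inside[OF assms(2,3)] by simp
  also have "\<dots> = card U + lam * card S"
    using assms(2,3) finite_subset[OF assms(3)] by (cases "card S") auto
  finally show ?thesis .
qed

lemma card_crossing_pairs_bound:
  assumes "A \<subseteq> points" "W \<subseteq> blocks"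
    and "\<forall>i\<in>blocks - W. bl ! i \<inter> A = {} \<or> bl ! i \<subseteq> A"
  shows "card A * card (points - A) * lam \<le> card W * k^2"
proof -
  define T where "T = Sigma A (\<lambda>x. Sigma (points - A) (\<lambda>y. pair_blocks x y))"
  have finA: "finite A" using finite_subset[OF assms(1)] by simp
  have "card T = (\<Sum>x\<in>A. \<Sum>y\<in>points - A. card (pair_blocks x y))"
    unfolding T_def using finA by (simp add: card_SigmaI)
  also have "\<dots> = (\<Sum>x\<in>A. \<Sum>y\<in>points - A. lam)"
    using assms(1) card_pair_blocks by (intro sum.cong refl) auto
  also have "\<dots> = card A * card (points - A) * lam" by simp
  finally have cT: "card T = card A * card (points - A) * lam" .
  have finW: "finite W" using finite_subset[OF assms(2) finite_blocks] .
  have "T \<subseteq> (\<Union>i\<in>W. bl ! i \<times> bl ! i \<times> {i})"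
  proof
    fix t assume "t \<in> T"
    then obtain x y i where t: "t = (x, y, i)" "x \<in> A" "y \<notin> A" "i \<in> blocks" "x \<in> bl ! i" "y \<in> bl ! i"
      unfolding T_def pair_blocks_def by auto
    hence "i \<in> W" using assms(3) by blast
    thus "t \<in> (\<Union>i\<in>W. bl ! i \<times> bl ! i \<times> {i})" using t by blast
  qed
  moreover have "finite (\<Union>i\<in>W. bl ! i \<times> bl ! i \<times> {i})"
  proof (rule finite_UN_I[OF finW])
    fix i assume "i \<in> W"
    thus "finite (bl ! i \<times> bl ! i \<times> {i})" using assms(2) finite_block by auto
  qed
  ultimately have "card T \<le> card (\<Union>i\<in>W. bl ! i \<times> bl ! i \<times> {i})" by (rule card_mono[rotated])
  also have "\<dots> \<le> (\<Sum>i\<in>W. card (bl ! i \<times> bl ! i \<times> {i}))" using finW by (rule card_UN_le)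
  also have "\<dots> \<le> (\<Sum>i\<in>W. k^2)"
  proof (rule sum_mono)
    fix i assume "i \<in> W"
    hence "card (bl ! i) \<le> k" using assms(2) card_block by auto
    thus "card (bl ! i \<times> bl ! i \<times> {i}) \<le> k^2"
      by (simp add: card_cartesian_product power2_eq_square mult_le_mono)
  qed
  finally show ?thesis using cT by simp
qed

lemma root_block_outside_star:
  assumes "star_like Phi" "v \<ge> 2"
  obtains i where "i \<in> point_blocks 0 - Phi"
proof -
  have "0 \<in> points" using assms(2) by (simp add: points_def)
  hence "lam * (v - 1) \<le> (k - 1) * card (point_blocks 0)" by (rule replication_lower_bound)
  moreover have "(k - 1) * (v - 1) < lam * (v - 1)" using assms(2) k_ge_3 lam_ge_k by simp
  ultimately have "card Phi < card (point_blocks 0)"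
    using assms(1) unfolding star_like_def by (metis le_less_trans mult_le_mono2 not_le order.trans)
  hence "\<not> point_blocks 0 \<subseteq> Phi" using assms(1) unfolding star_like_def
    by (meson card_mono finite_blocks finite_subset not_le)
  thus ?thesis using that by blast
qed

end

locale large_pbd_blocks = pbd_blocks +
  assumes v_large: "v \<ge> 4 * k^4 + 3"
begin

lemma v_ge_2: "v \<ge> 2"
  using v_large by linarith

text \<open>If no block outside \<open>U \<union> Phi\<close> crossed the cut, the replication bounds at \<open>a\<close> and \<open>y\<close> would make
  both sides large, while the fewer than \<open>2 v\<close> blocks in \<open>U \<union> Phi\<close> would cover all crossing pairs.\<close>
lemma cut_crossed:
  assumes "star_like Phi" "0 \<in> A" "A \<subseteq> points" "U \<subseteq> blocks" "card U < card A"
    and y: "y \<in> points - A" and a: "a \<in> A" "a \<noteq> 0"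
  shows "\<exists>i\<in>blocks - (U \<union> Phi). bl ! i \<inter> A \<noteq> {} \<and> \<not> bl ! i \<subseteq> A"
proof (rule ccontr)
  assume "\<not> ?thesis"
  hence no_cross: "\<forall>i\<in>blocks - (U \<union> Phi). bl ! i \<inter> A = {} \<or> bl ! i \<subseteq> A" by blast
  define m j where "m = card A" and "j = card (points - A)"
  have finA: "finite A" using finite_subset[OF assms(3)] by simp
  have mj: "m + j = v" unfolding m_def j_def using card_Diff_subset[OF finA assms(3)]
    card_mono[OF finite_points assms(3)] by (simp add: points_def)
  have "y \<noteq> 0" using y assms(2) by (metis DiffD2)
  moreover have "\<forall>i\<in>point_blocks y - (U \<union> Phi). bl ! i \<subseteq> points - A"
    using no_cross y block_subset_points unfolding point_blocks_def by blast
  ultimately have "card (point_blocks y) \<le> card U + lam * j"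
    using card_point_blocks_one_sided[OF assms(1) y _ _ assms(4)] unfolding j_def by blast
  hence "card (point_blocks y) \<le> (m - 1) + lam * j" using assms(5) unfolding m_def by linarith
  hence far: "lam * (v - 1) \<le> (k - 1) * ((m - 1) + lam * j)"
    using replication_lower_bound[of y] y mult_le_mono2 order_trans by blast
  have "\<forall>i\<in>point_blocks a - (U \<union> Phi). bl ! i \<subseteq> A"
    using no_cross a(1) unfolding point_blocks_def by blast
  hence "card (point_blocks a) \<le> card U + lam * m"
    using card_point_blocks_one_sided[OF assms(1) a(1) assms(3) a(2) assms(4)] unfolding m_def by blast
  hence "card (point_blocks a) \<le> (m - 1) + lam * m" using assms(5) unfolding m_def by linarith
  hence near: "lam * (v - 1) \<le> (k - 1) * ((m - 1) + lam * m)"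
    using replication_lower_bound[of a] a(1) assms(3) mult_le_mono2 order_trans by blast
  have "m * j * lam \<le> card (U \<union> Phi) * k^2"
    using card_crossing_pairs_bound[OF assms(3), of "U \<union> Phi"] no_cross assms(1,4)
    unfolding m_def j_def star_like_def by blast
  also have "\<dots> \<le> 2 * v * k^2"
    using card_Un_le[of U Phi] assms(1,5) mj unfolding m_def star_like_def
    by (intro mult_right_mono) linarith+
  moreover have "m \<ge> 1" unfolding m_def using finA a(1) by (simp add: Suc_le_eq card_gt_0_iff) blast
  ultimately show False using cut_inequalities_incompatible[OF k_ge_3 lam_ge_k v_large mj _ far near]
    by linarith
qed

lemma crossing_block_exists:
  assumes "star_like Phi" "0 \<in> A" "A \<subseteq> points" "A \<noteq> points" "U \<subseteq> blocks" "card U < card A"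
  obtains i where "i \<in> blocks - (U \<union> Phi)" "bl ! i \<inter> A \<noteq> {}" "bl ! i - A \<noteq> {}"
proof (cases "A = {0}")
  case True
  have "U = {}" using True assms(6) finite_subset[OF assms(5) finite_blocks] by simp
  obtain i where i: "i \<in> point_blocks 0 - Phi"
    using root_block_outside_star[OF assms(1) v_ge_2] by blast
  hence "i \<in> blocks" "0 \<in> bl ! i" unfolding point_blocks_def by auto
  moreover have "\<not> bl ! i \<subseteq> {0}"
    using card_block[OF \<open>i \<in> blocks\<close>] card_mono[of "{0}" "bl ! i"] by auto
  ultimately show ?thesis using that i True \<open>U = {}\<close> by blast
next
  case False
  then obtain a where "a \<in> A" "a \<noteq> 0" using assms(2) by blast
  moreover obtain y where "y \<in> points - A" using assms(3,4) by blast
  ultimately show ?thesis using cut_crossed[OF assms(1,2,3,5,6)] that by blast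
qed

end

section \<open>Growth steps and parity correction\<close>

context pbd_blocks
begin

text \<open>A step \<open>(i, y, p, c)\<close> attaches the new point \<open>y\<close> to the reached point \<open>p\<close> through block \<open>i\<close>,
  which contains a third point \<open>c\<close>; the block will be traversed along \<open>{p, c}\<close> or \<open>{y, c}\<close>.\<close>
fun growth_steps :: "nat set \<Rightarrow> (nat \<times> nat \<times> nat \<times> nat) list \<Rightarrow> bool" where
  "growth_steps A [] \<longleftrightarrow> True"
| "growth_steps A ((i, y, p, c) # st) \<longleftrightarrow> i \<in> blocks \<and> y \<in> points \<and> y \<notin> A \<and> p \<in> A \<and>
     {y, p, c} \<subseteq> bl ! i \<and> c \<noteq> y \<and> c \<noteq> p \<and> growth_steps (insert y A) st"

lemma growth_steps_new_point: "growth_steps A st \<Longrightarrow> (i, y, p, c) \<in> set st \<Longrightarrow> y \<notin> A"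
  by (induction A st rule: growth_steps.induct) auto

lemma growth_steps_step:
  "growth_steps A st \<Longrightarrow> (i, y, p, c) \<in> set st \<Longrightarrow>
     i \<in> blocks \<and> {y, p, c} \<subseteq> bl ! i \<and> y \<noteq> p \<and> c \<noteq> y \<and> c \<noteq> p"
  by (induction A st rule: growth_steps.induct) auto

definition toggle_count :: "(nat \<times> nat \<times> nat \<times> nat) set \<Rightarrow> nat \<Rightarrow> nat" where
  "toggle_count J x = card {q\<in>J. x = fst (snd q) \<or> x = fst (snd (snd q))}"

lemma toggle_count_insert:
  assumes "finite J" "(i, y, p, c) \<notin> J"
  shows "toggle_count (insert (i, y, p, c) J) x = toggle_count J x + of_bool (x = y \<or> x = p)"
proof -
  have "{q\<in>insert (i, y, p, c) J. x = fst (snd q) \<or> x = fst (snd (snd q))} =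
     (if x = y \<or> x = p then insert (i, y, p, c) {q\<in>J. x = fst (snd q) \<or> x = fst (snd (snd q))}
      else {q\<in>J. x = fst (snd q) \<or> x = fst (snd (snd q))})" by auto
  thus ?thesis unfolding toggle_count_def using assms by auto
qed

text \<open>Toggling a step flips the parity at its two points \<open>y\<close> and \<open>p\<close>; working from the leaves of the
  growth tree backwards, any parity pattern can be pushed into the starting set \<open>A\<close>.\<close>
lemma growth_steps_parity_correction:
  "growth_steps A st \<Longrightarrow> E \<subseteq> A \<union> (fst \<circ> snd) ` set st \<Longrightarrow>
    \<exists>J\<subseteq>set st. \<exists>EA\<subseteq>A. \<forall>x. x \<in> E \<longleftrightarrow> (x \<in> EA) \<noteq> odd (toggle_count J x)"
proof (induction st arbitrary: A E)
  case Nil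
  hence "E \<subseteq> A" by simp
  moreover have "toggle_count {} x = 0" for x by (simp add: toggle_count_def)
  ultimately have "\<forall>x. x \<in> E \<longleftrightarrow> (x \<in> E) \<noteq> odd (toggle_count {} x)" by simp
  thus ?case using \<open>E \<subseteq> A\<close> by (metis empty_subsetI)
next
  case (Cons q st)
  obtain i y p c where q: "q = (i, y, p, c)" by (cases q) auto
  have st: "growth_steps (insert y A) st" and yA: "y \<notin> A" and pA: "p \<in> A"
    using Cons.prems(1) q by auto
  have "E \<subseteq> insert y A \<union> (fst \<circ> snd) ` set st" using Cons.prems(2) q by auto
  from Cons.IH[OF st this] obtain J' EA' where J': "J' \<subseteq> set st" "EA' \<subseteq> insert y A"
    and E: "\<forall>x. x \<in> E \<longleftrightarrow> (x \<in> EA') \<noteq> odd (toggle_count J' x)"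
    by (elim exE conjE) (rule that; assumption)
  have "q \<notin> J'" using J'(1) growth_steps_new_point[OF st] q by blast
  show ?case
  proof (cases "y \<in> EA'")
    case False
    thus ?thesis using J' E by (intro exI[of _ J'] exI[of _ EA']) auto
  next
    case True
    define EA where "EA = (if p \<in> EA' then EA' - {y, p} else insert p (EA' - {y}))"
    have toggle: "toggle_count (insert q J') x = toggle_count J' x + of_bool (x = y \<or> x = p)" for x
      using toggle_count_insert finite_subset[OF J'(1)] \<open>q \<notin> J'\<close> unfolding q by blast
    have "\<forall>x. x \<in> E \<longleftrightarrow> (x \<in> EA) \<noteq> odd (toggle_count (insert q J') x)"
    proof
      fix x
      have "y \<noteq> p" using yA pA by blast
      thus "x \<in> E \<longleftrightarrow> (x \<in> EA) \<noteq> odd (toggle_count (insert q J') x)"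
        using E[rule_format, of x] True unfolding toggle EA_def
        by (cases "x = y"; cases "x = p") auto
    qed
    moreover have "insert q J' \<subseteq> set (q # st)" "EA \<subseteq> A" using J' pA unfolding EA_def by auto
    ultimately show ?thesis by blast
  qed
qed

end

context large_pbd_blocks
begin

lemma growth_steps_exist:
  assumes "star_like Phi"
  shows "0 \<in> A \<Longrightarrow> A \<subseteq> points \<Longrightarrow> U \<subseteq> blocks \<Longrightarrow> card U < card A \<Longrightarrow>
    \<exists>st. growth_steps A st \<and> (\<forall>q\<in>set st. fst q \<notin> U \<union> Phi) \<and> distinct (map fst st) \<and>
      A \<union> (fst \<circ> snd) ` set st = points"
proof (induction "card points - card A" arbitrary: A U rule: less_induct)
  case less
  have finA: "finite A" using finite_subset[OF less.prems(2) finite_points] .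
  show ?case
  proof (cases "A = points")
    case True thus ?thesis by (intro exI[of _ "[]"]) simp
  next
    case False
    then obtain i where i: "i \<in> blocks - (U \<union> Phi)" "bl ! i \<inter> A \<noteq> {}" "bl ! i - A \<noteq> {}"
      using crossing_block_exists[OF assms less.prems(1,2) _ less.prems(3,4)] by blast
    obtain p y where p: "p \<in> bl ! i" "p \<in> A" and y: "y \<in> bl ! i" "y \<notin> A" using i(2,3) by blast
    obtain c where c: "c \<in> bl ! i" "c \<noteq> y" "c \<noteq> p" using block_third_point i(1) by blast
    have yV: "y \<in> points" using y(1) i(1) block_subset_points by blast
    have A': "0 \<in> insert y A" "insert y A \<subseteq> points" using less.prems(1,2) yV by auto
    have U': "insert i U \<subseteq> blocks" using less.prems(3) i(1) by blast
    have "card points - card (insert y A) < card points - card A"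
      using card_mono[OF finite_points A'(2)] y(2) finA by simp
    moreover have "card (insert i U) < card (insert y A)"
      using i(1) y(2) finA finite_subset[OF less.prems(3) finite_blocks] less.prems(4) by simp
    ultimately obtain st where st: "growth_steps (insert y A) st"
        "\<forall>q\<in>set st. fst q \<notin> insert i U \<union> Phi" "distinct (map fst st)"
        "insert y A \<union> (fst \<circ> snd) ` set st = points"
      using less.hyps[OF _ A' U'] by blast
    show ?thesis
    proof (intro exI[of _ "(i, y, p, c) # st"] conjI)
      show "growth_steps A ((i, y, p, c) # st)" using st(1) i(1) yV y p c by simp
      show "\<forall>q\<in>set ((i, y, p, c) # st). fst q \<notin> U \<union> Phi" using st(2) i(1) by auto
      show "distinct (map fst ((i, y, p, c) # st))" using st(2,3) by auto
      show "A \<union> (fst \<circ> snd) ` set ((i, y, p, c) # st) = points" using st(4) by auto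
    qed
  qed
qed

end

section \<open>Traversal pairs\<close>

context pbd_blocks
begin

lemma star_like_image:
  assumes "\<forall>y\<in>points - {0}. phi y \<in> pair_blocks 0 y"
  shows "star_like (phi ` (points - {0}))"
  unfolding star_like_def
proof (intro conjI)
  show "phi ` (points - {0}) \<subseteq> blocks" using assms unfolding pair_blocks_def by auto
  show "card (phi ` (points - {0})) \<le> v - 1"
    using card_image_le[of "points - {0}" phi] by (simp add: points_def card_Diff_singleton_if split: if_splits)
  show "\<forall>y\<in>points - {0}. phi ` (points - {0}) \<inter> point_blocks y \<subseteq> pair_blocks 0 y"
    using assms unfolding pair_blocks_def point_blocks_def by auto
qed

end

locale pbd_skeleton = pbd_blocks +
  fixes phi :: "nat \<Rightarrow> nat" and st :: "(nat \<times> nat \<times> nat \<times> nat) list"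
  assumes phi_inj: "inj_on phi (points - {0})"
    and phi_pair: "\<forall>y\<in>points - {0}. phi y \<in> pair_blocks 0 y"
    and st_growth: "growth_steps {0} st"
    and st_outside_star: "\<forall>q\<in>set st. fst q \<notin> phi ` (points - {0})"
    and st_distinct: "distinct (map fst st)"
    and st_spanning: "{0} \<union> (fst \<circ> snd) ` set st = points"
    and two_points: "v \<ge> 2"
begin

definition "star = phi ` (points - {0})"

definition "default_pair i = (SOME s. s \<subseteq> bl ! i \<and> card s = 2)"

text \<open>The two points between which block \<open>i\<close> is traversed; \<open>J\<close> is the set of toggled growth steps.\<close>
definition traversal_pair :: "(nat \<times> nat \<times> nat \<times> nat) set \<Rightarrow> nat \<Rightarrow> nat set" where
  "traversal_pair J i = (if i \<in> star then {0, inv_into (points - {0}) phi i}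
     else case map_of st i of
       Some (y, p, c) \<Rightarrow> if (i, y, p, c) \<in> J then {y, c} else {p, c}
     | None \<Rightarrow> default_pair i)"

definition "traversal_degree J x = card {i\<in>blocks. x \<in> traversal_pair J i}"

lemma map_of_st_iff: "map_of st i = Some (y, p, c) \<longleftrightarrow> (i, y, p, c) \<in> set st"
  using st_distinct by (metis map_of_SomeD map_of_is_SomeI)

lemma st_step: "(i, y, p, c) \<in> set st \<Longrightarrow>
    i \<in> blocks \<and> i \<notin> star \<and> {y, p, c} \<subseteq> bl ! i \<and> y \<noteq> p \<and> c \<noteq> y \<and> c \<noteq> p"
  using growth_steps_step[OF st_growth] st_outside_star unfolding star_def by fastforce

lemma traversal_pair_star: "y \<in> points - {0} \<Longrightarrow> traversal_pair J (phi y) = {0, y}"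
  using phi_inj unfolding traversal_pair_def star_def by simp

lemma default_pair: "i \<in> blocks \<Longrightarrow> default_pair i \<subseteq> bl ! i \<and> card (default_pair i) = 2"
  unfolding default_pair_def
proof (rule someI_ex)
  assume "i \<in> blocks"
  hence "2 \<le> card (bl ! i)" using card_block by fastforce
  thus "\<exists>s. s \<subseteq> bl ! i \<and> card s = 2" by (rule obtain_subset_with_card_n) blast
qed

lemma traversal_pair_in_block:
  assumes "i \<in> blocks" shows "traversal_pair J i \<subseteq> bl ! i \<and> card (traversal_pair J i) = 2"
proof (cases "i \<in> star")
  case True
  then obtain w where w: "w \<in> points - {0}" "i = phi w" unfolding star_def by blast
  thus ?thesis using phi_pair traversal_pair_star[OF w(1)] unfolding pair_blocks_def by auto
next
  case False
  show ?thesis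
  proof (cases "map_of st i")
    case None thus ?thesis using False default_pair[OF assms] unfolding traversal_pair_def by simp
  next
    case (Some a)
    then obtain y p c where m: "map_of st i = Some (y, p, c)" by (cases a) auto
    hence "(i, y, p, c) \<in> set st" using map_of_st_iff by blast
    thus ?thesis using st_step[of i y p c] False m unfolding traversal_pair_def by auto
  qed
qed

lemma traversal_pair_changed:
  assumes "J \<subseteq> set st"
  shows "{i\<in>blocks. (x \<in> traversal_pair J i) \<noteq> (x \<in> traversal_pair {} i)} =
    fst ` {q\<in>J. x = fst (snd q) \<or> x = fst (snd (snd q))}"
proof
  show "{i\<in>blocks. (x \<in> traversal_pair J i) \<noteq> (x \<in> traversal_pair {} i)} \<subseteq>
      fst ` {q\<in>J. x = fst (snd q) \<or> x = fst (snd (snd q))}"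
  proof
    fix i assume i: "i \<in> {i\<in>blocks. (x \<in> traversal_pair J i) \<noteq> (x \<in> traversal_pair {} i)}"
    hence "i \<notin> star" unfolding traversal_pair_def by auto
    moreover obtain y p c where m: "map_of st i = Some (y, p, c)"
      using i \<open>i \<notin> star\<close> unfolding traversal_pair_def by (cases "map_of st i") auto
    ultimately have "(i, y, p, c) \<in> J" "x = y \<or> x = p"
      using i unfolding traversal_pair_def by (auto split: if_splits)
    thus "i \<in> fst ` {q\<in>J. x = fst (snd q) \<or> x = fst (snd (snd q))}" by force
  qed
next
  show "fst ` {q\<in>J. x = fst (snd q) \<or> x = fst (snd (snd q))} \<subseteq>
      {i\<in>blocks. (x \<in> traversal_pair J i) \<noteq> (x \<in> traversal_pair {} i)}"
  proof
    fix i assume "i \<in> fst ` {q\<in>J. x = fst (snd q) \<or> x = fst (snd (snd q))}"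
    then obtain y p c where q: "(i, y, p, c) \<in> J" "x = y \<or> x = p" by force
    hence "(i, y, p, c) \<in> set st" using assms by blast
    hence "map_of st i = Some (y, p, c)" "i \<in> blocks \<and> i \<notin> star \<and> y \<noteq> p \<and> c \<noteq> y \<and> c \<noteq> p"
      using map_of_st_iff[THEN iffD2] st_step by simp_all
    thus "i \<in> {i\<in>blocks. (x \<in> traversal_pair J i) \<noteq> (x \<in> traversal_pair {} i)}"
      using q unfolding traversal_pair_def by auto
  qed
qed

lemma traversal_degree_parity:
  assumes "J \<subseteq> set st"
  shows "even (traversal_degree J x + traversal_degree {} x) \<longleftrightarrow> even (toggle_count J x)"
proof -
  have "traversal_degree J x + traversal_degree {} x =
      (\<Sum>i\<in>blocks. of_bool (x \<in> traversal_pair J i) + of_bool (x \<in> traversal_pair {} i))"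
    unfolding traversal_degree_def by (simp add: sum.distrib of_bool_def sum.inter_filter[symmetric])
  hence "even (traversal_degree J x + traversal_degree {} x) \<longleftrightarrow>
      even (card {i\<in>blocks. odd (of_bool (x \<in> traversal_pair J i) + of_bool (x \<in> traversal_pair {} i) :: nat)})"
    by (simp add: even_sum_iff)
  also have "{i\<in>blocks. odd (of_bool (x \<in> traversal_pair J i) + of_bool (x \<in> traversal_pair {} i) :: nat)} =
      fst ` {q\<in>J. x = fst (snd q) \<or> x = fst (snd (snd q))}"
    unfolding traversal_pair_changed[OF assms, symmetric] by auto
  also have "inj_on fst (set st)" using st_distinct by (simp add: distinct_map)
  hence "card (fst ` {q\<in>J. x = fst (snd q) \<or> x = fst (snd (snd q))}) = toggle_count J x"
    unfolding toggle_count_def using assms by (intro card_image) (auto intro: inj_on_subset)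
  finally show ?thesis .
qed

lemma traversal_degree_outside:
  assumes "x \<notin> points" shows "traversal_degree J x = 0"
proof -
  have "x \<notin> traversal_pair J i" if "i \<in> blocks" for i
    using assms traversal_pair_in_block[OF that] block_subset_points[OF that] by auto
  thus ?thesis unfolding traversal_degree_def by simp
qed

lemma sum_traversal_degree: "(\<Sum>x\<in>points. traversal_degree J x) = 2 * card blocks"
proof -
  have "(\<Sum>x\<in>points. traversal_degree J x) = (\<Sum>i\<in>blocks. card {x\<in>points. x \<in> traversal_pair J i})"
    unfolding traversal_degree_def by (rule double_counting) simp_all
  also have "\<dots> = (\<Sum>i\<in>blocks. 2)"
  proof (rule sum.cong[OF refl])
    fix i assume "i \<in> blocks"
    hence "{x\<in>points. x \<in> traversal_pair J i} = traversal_pair J i"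
      using traversal_pair_in_block[of i J] block_subset_points[of i] by auto
    thus "card {x\<in>points. x \<in> traversal_pair J i} = 2"
      using traversal_pair_in_block[OF \<open>i \<in> blocks\<close>] by simp
  qed
  finally show ?thesis by simp
qed

text \<open>Toggle the growth steps so that every point other than the root gets even degree;
  the root then follows from the handshake identity.\<close>
lemma even_traversal_degrees:
  obtains J where "J \<subseteq> set st" "\<And>x. even (traversal_degree J x)"
proof -
  define E where "E = {x\<in>points. odd (traversal_degree {} x)}"
  have "E \<subseteq> {0} \<union> (fst \<circ> snd) ` set st" using st_spanning unfolding E_def by blast
  from growth_steps_parity_correction[OF st_growth this] obtain J EA where J: "J \<subseteq> set st" "EA \<subseteq> {0}"
    and EJ: "\<forall>x. x \<in> E \<longleftrightarrow> (x \<in> EA) \<noteq> odd (toggle_count J x)"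
    by (elim exE conjE) (rule that; assumption)
  have nonroot: "even (traversal_degree J x)" if "x \<in> points - {0}" for x
  proof -
    have "x \<notin> EA" using J(2) that by blast
    thus ?thesis using EJ traversal_degree_parity[OF J(1), of x] that unfolding E_def by auto
  qed
  have "0 \<in> points" using st_spanning by blast
  hence "(\<Sum>x\<in>points. traversal_degree J x) = traversal_degree J 0 + (\<Sum>x\<in>points - {0}. traversal_degree J x)"
    by (simp add: sum.remove)
  moreover have "even (\<Sum>x\<in>points - {0}. traversal_degree J x)" using nonroot by (intro dvd_sum) auto
  ultimately have "even (traversal_degree J 0)" using sum_traversal_degree by (metis dvd_add_left_iff dvd_triv_left)
  hence "even (traversal_degree J x)" for x
    using nonroot traversal_degree_outside by (cases "x \<in> points - {0}") auto
  thus ?thesis using that J(1) by blast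
qed

definition traversal_edges :: "(nat \<times> nat \<times> nat \<times> nat) set \<Rightarrow> (nat set \<times> nat set) multiset" where
  "traversal_edges J = mset (map (\<lambda>i. (traversal_pair J i, bl ! i)) [0..<length bl])"

lemma in_traversal_edges: "e \<in># traversal_edges J \<longleftrightarrow> (\<exists>i\<in>blocks. e = (traversal_pair J i, bl ! i))"
  unfolding traversal_edges_def blocks_def by auto

lemma edge_degree_traversal_edges: "edge_degree (traversal_edges J) x = traversal_degree J x"
proof -
  have "edge_degree (traversal_edges J) x = length (filter (\<lambda>i. x \<in> traversal_pair J i) [0..<length bl])"
    unfolding edge_degree_def traversal_edges_def
    by (simp only: mset_filter[symmetric] size_mset filter_map length_map comp_def fst_conv)
  also have "\<dots> = traversal_degree J x"
    unfolding length_filter_conv_card traversal_degree_def blocks_def by (intro arg_cong[where f = card]) auto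
  finally show ?thesis .
qed

lemma star_edge_in_traversal_edges:
  assumes "y \<in> points - {0}" shows "({0, y}, bl ! phi y) \<in># traversal_edges J"
proof -
  have "phi y \<in> blocks" using phi_pair assms unfolding pair_blocks_def by blast
  moreover have "({0, y}, bl ! phi y) = (traversal_pair J (phi y), bl ! phi y)"
    using traversal_pair_star[OF assms] by simp
  ultimately show ?thesis unfolding in_traversal_edges by blast
qed

lemma traversal_edges_connected:
  assumes "0 \<in> S" "closed_under_edges (traversal_edges J) S"
  shows "\<forall>e\<in>#traversal_edges J. fst e \<subseteq> S"
proof -
  have "y \<in> S" if "y \<in> points" for y
  proof (cases "y = 0")
    case False
    hence "{0, y} \<inter> S \<noteq> {} \<longrightarrow> {0, y} \<subseteq> S"
      using assms(2) star_edge_in_traversal_edges[of y J] that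
      unfolding closed_under_edges_def by fastforce
    thus ?thesis using assms(1) by simp
  qed (use assms(1) in simp)
  show ?thesis
  proof
    fix e assume "e \<in># traversal_edges J"
    then obtain i where "i \<in> blocks" "e = (traversal_pair J i, bl ! i)" unfolding in_traversal_edges by blast
    thus "fst e \<subseteq> S"
      using traversal_pair_in_block[of i J] block_subset_points[of i] \<open>\<And>y. y \<in> points \<Longrightarrow> y \<in> S\<close>
      by auto
  qed
qed

lemma traversal_circuit_covers_points:
  assumes "dart_walk 0 ds 0" "edges_of ds = traversal_edges J"
  shows "points \<subseteq> set (map fst ds)"
proof
  fix y assume y: "y \<in> points"
  define w where "w = (if y = 0 then 1 else y)"
  have w: "w \<in> points - {0}" "y \<in> {0, w}"
    using y two_points unfolding w_def by (cases "y = 0") (simp_all add: points_def)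
  have "({0, w}, bl ! phi w) \<in> undirected ` set ds"
    using star_edge_in_traversal_edges[OF w(1), of J] unfolding assms(2)[symmetric] by simp
  then obtain d where d: "d \<in> set ds" "undirected d = ({0, w}, bl ! phi w)" by (metis imageE)
  hence "{fst d, fst (snd d)} = {0, w}" unfolding undirected_def by simp
  hence "y = fst d \<or> y = fst (snd d)" using w(2) by blast
  moreover have "fst d \<in> set (map fst ds)" using d(1) by simp
  ultimately show "y \<in> set (map fst ds)" using closed_dart_walk_heads[OF assms(1) d(1)] by blast
qed

lemma traversal_darts:
  assumes "edges_of ds = traversal_edges J" "d \<in> set ds"
  shows "fst d \<noteq> fst (snd d) \<and> {fst d, fst (snd d)} \<subseteq> snd (snd d)"
proof -
  have "undirected d \<in># traversal_edges J" unfolding assms(1)[symmetric] using assms(2) by simp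
  then obtain i where "i \<in> blocks" "{fst d, fst (snd d)} = traversal_pair J i" "snd (snd d) = bl ! i"
    unfolding in_traversal_edges undirected_def by auto
  hence "card {fst d, fst (snd d)} = 2" "{fst d, fst (snd d)} \<subseteq> snd (snd d)"
    using traversal_pair_in_block by auto
  thus ?thesis by (cases "fst d = fst (snd d)") auto
qed

lemma traversal_labels:
  assumes "edges_of ds = traversal_edges J"
  shows "mset (map (snd \<circ> snd) ds) = mset bl"
proof -
  have "snd \<circ> undirected = snd \<circ> (snd :: nat \<times> nat \<times> nat set \<Rightarrow> _)"
    by (auto simp: undirected_def)
  hence "mset (map (snd \<circ> snd) ds) = image_mset snd (edges_of ds)" by (simp add: multiset.map_comp)
  also have "\<dots> = mset (map (\<lambda>i. bl ! i) [0..<length bl])" unfolding assms traversal_edges_def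
    by (simp only: mset_map[symmetric] map_map comp_def snd_conv)
  also have "\<dots> = mset bl" by (simp add: map_nth)
  finally show ?thesis .
qed

theorem spanning_euler_tour_from_skeleton: "\<exists>vs es. spanning_euler_tour points (mset bl) vs es"
proof -
  obtain J where "J \<subseteq> set st" and even: "\<And>x. even (traversal_degree J x)"
    using even_traversal_degrees by blast
  have "card (fst e) = 2" if "e \<in># traversal_edges J" for e
    using that traversal_pair_in_block unfolding in_traversal_edges by force
  hence "\<forall>e\<in>#traversal_edges J. card (fst e) = 2" by blast
  moreover have "\<forall>y. even (edge_degree (traversal_edges J) y)" using even edge_degree_traversal_edges by simp
  moreover have "\<forall>S. 0 \<in> S \<longrightarrow> closed_under_edges (traversal_edges J) S \<longrightarrow>
      (\<forall>e\<in>#traversal_edges J. fst e \<subseteq> S)" using traversal_edges_connected by simp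
  ultimately obtain ds where ds: "dart_walk 0 ds 0" "edges_of ds = traversal_edges J"
    by (rule euler_circuit_exists)
  have "closed_walk (map fst ds) (map (snd \<circ> snd) ds)"
    using closed_dart_walk_closed_walk[OF ds(1)] traversal_darts[OF ds(2)] by blast
  hence "spanning_euler_tour points (mset bl) (map fst ds) (map (snd \<circ> snd) ds)"
    using traversal_circuit_covers_points[OF ds] traversal_labels[OF ds(2)]
    unfolding spanning_euler_tour_def euler_tour_def by simp
  thus ?thesis by blast
qed

end

context large_pbd_blocks
begin

theorem spanning_euler_tour_exists: "\<exists>vs es. spanning_euler_tour {..<v} (mset bl) vs es"
proof -
  have root: "0 \<in> points" using v_ge_2 by (simp add: points_def)
  obtain phi where phi: "inj_on phi (points - {0})" "\<forall>y\<in>points - {0}. phi y \<in> pair_blocks 0 y"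
    using star_blocks_sdr[OF root] by blast
  obtain st where "growth_steps {0} st" "\<forall>q\<in>set st. fst q \<notin> {} \<union> phi ` (points - {0})"
    "distinct (map fst st)" "{0} \<union> (fst \<circ> snd) ` set st = points"
    using growth_steps_exist[OF star_like_image[OF phi(2)], of "{0}" "{}"] root by auto
  then interpret pbd_skeleton v k lam bl phi st
    using phi v_ge_2 by unfold_locales auto
  show ?thesis using spanning_euler_tour_from_skeleton unfolding points_def .
qed

end

lemma large_pbd_blocks_of_PBD:
  assumes "finite K" "K \<noteq> {}" "Min K \<ge> 3" "lam \<ge> Max K"
    and "v \<ge> 4 * Max K ^ 4 + 3" "is_PBD v K lam (mset bl)"
  shows "large_pbd_blocks v (Max K) lam bl"
proof
  obtain a where "a \<in> K" using assms(2) by blast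
  thus "Max K \<ge> 3" using assms(3) Min_le[OF assms(1)] Max_ge[OF assms(1)] by (meson order_trans)
  show "bl ! i \<subseteq> {..<v} \<and> 3 \<le> card (bl ! i) \<and> card (bl ! i) \<le> Max K" if "i < length bl" for i
  proof -
    have "bl ! i \<subseteq> {..<v}" "card (bl ! i) \<in> K"
      using assms(6) nth_mem[OF that] unfolding is_PBD_def by auto
    thus ?thesis using assms(1,3) Min_le Max_ge by (metis order_trans)
  qed
  show "card {i. i < length bl \<and> {x, y} \<subseteq> bl ! i} = lam" if "x < v" "y < v" "x \<noteq> y" for x y
  proof -
    have "size (filter_mset (\<lambda>B. {x, y} \<subseteq> B) (mset bl)) = lam"
      using assms(6) that unfolding is_PBD_def by blast
    thus ?thesis by (simp only: mset_filter[symmetric] size_mset length_filter_conv_card)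
  qed
qed (use assms(4,5) in auto)

theorem corollary1p6:
  fixes K :: "nat set" and lam :: nat
  assumes "finite K" and "K \<noteq> {}" and "Min K \<ge> 3" and "lam \<ge> Max K"
  shows "\<exists>N. \<forall>v Bs. v \<ge> N \<longrightarrow> is_PBD v K lam Bs \<longrightarrow>
           (\<exists>vs es. spanning_euler_tour {..<v} Bs vs es)"
proof (intro exI[of _ "4 * Max K ^ 4 + 3"] allI impI)
  fix v Bs assume "4 * Max K ^ 4 + 3 \<le> v" "is_PBD v K lam Bs"
  moreover obtain bl where bl: "mset bl = Bs" using ex_mset by blast
  ultimately interpret large_pbd_blocks v "Max K" lam bl
    using large_pbd_blocks_of_PBD[OF assms] by blast
  show "\<exists>vs es. spanning_euler_tour {..<v} Bs vs es"
    using spanning_euler_tour_exists bl by simp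
qed

end
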